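(* Let $X=\{x_1,\dots,x_N\}\subset\mathbb{R}^d$, let $l\in\mathbb{N}$, $\Theta=[0,\pi)^{(d-1)\times l}$, and for $\boldsymbol\theta\in\Theta$ let $V(\boldsymbol\theta)\in\mathbb{R}^{d\times l}$ be the projection matrix and $P(\boldsymbol\theta)=V(\boldsymbol\theta)^\top X\in\mathbb{R}^{l\times N}$ the projected data, as defined in the context. Let $s:\mathbb{R}^{l\times N}\times\{1,\dots,N\}^2\to\mathbb{R}^+$ be a positive function such that, for each fixed $i,j\in\{1,\dots,N\}$, $P\mapsto s(P,i,j)$ is Lipschitz continuous on $\mathbb{R}^{l\times N}$. Let $L(\boldsymbol\theta)$ and $L_{\mathrm{norm}}(\boldsymbol\theta)$ be the standard and normalised graph Laplacians of the affinity matrix $A(\boldsymbol\theta)_{ij}=s(P(\boldsymbol\theta),i,j)$. Then $\boldsymbol\theta\mapsto\lambda_2(L(\boldsymbol\theta))$ and $\boldsymbol\theta\mapsto\lambda_2(L_{\mathrm{norm}}(\boldsymbol\theta))$ are Lipschitz continuous on $\Theta$.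
   Context: For $\boldsymbol\theta\in\Theta=[0,\pi)^{(d-1)\times l}$ the matrix $V(\boldsymbol\theta)\in\mathbb{R}^{d\times l}$ is defined by $V(\boldsymbol\theta)_{ij}=\cos(\boldsymbol\theta_{ij})\prod_{k=1}^{i-1}\sin(\boldsymbol\theta_{kj})$ for $i=1,\dots,d-1$ and $V(\boldsymbol\theta)_{dj}=\prod_{k=1}^{d-1}\sin(\boldsymbol\theta_{kj})$ (so each column has unit norm). The data set $X$ is viewed as the $d\times N$ matrix with columns $x_i$, and $P(\boldsymbol\theta)=V(\boldsymbol\theta)^\top X$ has columns $p(\boldsymbol\theta)_i=V(\boldsymbol\theta)^\top x_i$. For an affinity matrix $A$ with degrees $d_i=\sum_j A_{ij}$ and degree matrix $D=\mathrm{diag}(d_1,\dots,d_N)$, the standard Laplacian is $L=D-A$ and the normalised Laplacian is $L_{\mathrm{norm}}=D^{-1/2}LD^{-1/2}$. $\lambda_i(\cdot)$ denotes the $i$-th smallest eigenvalue of a real symmetric matrix. *)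

theory Defs
  imports "Jordan_Normal_Form.Char_Poly" "HOL-Computational_Algebra.Polynomial"
begin

(* Matrices are Jordan_Normal_Form matrices; indices are 0-based. *)

definition frob :: "nat \<Rightarrow> nat \<Rightarrow> real mat \<Rightarrow> real" where
  "frob m n M = sqrt (\<Sum>i<m. \<Sum>j<n. (M $$ (i,j))^2)"

definition mat_lipschitz_on :: "nat \<Rightarrow> nat \<Rightarrow> real mat set \<Rightarrow> (real mat \<Rightarrow> real) \<Rightarrow> bool" where
  "mat_lipschitz_on m n S f \<longleftrightarrow>
     (\<exists>C. \<forall>M\<in>S. \<forall>M'\<in>S. \<bar>f M - f M'\<bar> \<le> C * frob m n (M - M'))"

definition Theta :: "nat \<Rightarrow> nat \<Rightarrow> real mat set" where
  "Theta d l = {\<theta> \<in> carrier_mat (d - 1) l. \<forall>i<d - 1. \<forall>j<l. 0 \<le> \<theta> $$ (i,j) \<and> \<theta> $$ (i,j) < pi}"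

definition Vmat :: "nat \<Rightarrow> nat \<Rightarrow> real mat \<Rightarrow> real mat" where
  "Vmat d l \<theta> = mat d l (\<lambda>(i,j).
     if i < d - 1 then cos (\<theta> $$ (i,j)) * (\<Prod>k<i. sin (\<theta> $$ (k,j)))
     else (\<Prod>k<d - 1. sin (\<theta> $$ (k,j))))"

definition Pmat :: "nat \<Rightarrow> nat \<Rightarrow> real mat \<Rightarrow> real mat \<Rightarrow> real mat" where
  "Pmat d l X \<theta> = transpose_mat (Vmat d l \<theta>) * X"

definition affinity :: "nat \<Rightarrow> (real mat \<Rightarrow> nat \<Rightarrow> nat \<Rightarrow> real) \<Rightarrow> real mat \<Rightarrow> real mat" where
  "affinity N s P = mat N N (\<lambda>(i,j). s P i j)"

definition degree :: "real mat \<Rightarrow> nat \<Rightarrow> real" where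
  "degree A i = (\<Sum>j<dim_col A. A $$ (i,j))"

definition degree_mat :: "real mat \<Rightarrow> real mat" where
  "degree_mat A = mat (dim_row A) (dim_row A) (\<lambda>(i,j). if i = j then degree A i else 0)"

definition laplacian :: "real mat \<Rightarrow> real mat" where
  "laplacian A = degree_mat A - A"

definition norm_laplacian :: "real mat \<Rightarrow> real mat" where
  "norm_laplacian A =
     (let Dh = mat (dim_row A) (dim_row A) (\<lambda>(i,j). if i = j then 1 / sqrt (degree A i) else 0)
      in Dh * laplacian A * Dh)"

(* eigenvalues (roots of the characteristic polynomial, with multiplicity) in ascending order;
   lambda_k = the k-th smallest (k >= 1) *)
definition eigvals_sorted :: "real mat \<Rightarrow> real list" where
  "eigvals_sorted M = sorted_list_of_multiset (proots (char_poly M))"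

definition eig_lambda :: "nat \<Rightarrow> real mat \<Rightarrow> real" where
  "eig_lambda k M = eigvals_sorted M ! (k - 1)"

end

theory Submission
  imports Defs "HOL-Analysis.Function_Topology"
begin

text \<open>For symmetric matrices the Courant--Fischer characterisation gives
  \<open>\<bar>\<lambda>\<^sub>2 A - \<lambda>\<^sub>2 B\<bar> \<le> N \<cdot> \<parallel>A - B\<parallel>\<^sub>F\<close>, so it suffices that the entries of
  both Laplacians are Lipschitz in \<open>\<theta>\<close>. The entries of \<open>V \<theta>\<close> are products of sines and
  cosines, hence bounded and Lipschitz, and the projected data, the affinities and the degrees
  inherit this through composition, finite sums and products. For the normalised Laplacian the
  degrees must moreover be bounded away from zero on \<open>\<Theta>\<close>; they are, being positive and
  continuous on the compact box \<open>[0, \<pi>]\<^sup>(\<^sup>d\<^sup>-\<^sup>1\<^sup>)\<^sup>\<times>\<^sup>l\<close>.\<close>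

section \<open>Orthogonal diagonalisation of real symmetric matrices\<close>

definition orthogonal_matrix :: "nat \<Rightarrow> 'a::comm_ring_1 mat \<Rightarrow> bool" where
  "orthogonal_matrix n U \<longleftrightarrow>
     U \<in> carrier_mat n n \<and> transpose_mat U * U = 1\<^sub>m n \<and> U * transpose_mat U = 1\<^sub>m n"

lemma orthogonal_matrix_mult:
  assumes U: "orthogonal_matrix n U" and V: "orthogonal_matrix n V"
  shows "orthogonal_matrix n (U * V)"
proof -
  have Uc: "U \<in> carrier_mat n n" and Vc: "V \<in> carrier_mat n n"
    using U V unfolding orthogonal_matrix_def by auto
  have UT: "transpose_mat (U * V) = transpose_mat V * transpose_mat U"
    using Uc Vc by (rule transpose_mult)
  have "transpose_mat V * transpose_mat U * (U * V) = transpose_mat V * (transpose_mat U * U) * V"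
    using Uc Vc by (simp add: assoc_mult_mat[of _ n n _ n _ n])
  moreover have "U * V * (transpose_mat V * transpose_mat U) = U * (V * transpose_mat V) * transpose_mat U"
    using Uc Vc by (simp add: assoc_mult_mat[of _ n n _ n _ n])
  ultimately show ?thesis
    using U V Uc Vc unfolding orthogonal_matrix_def UT by simp
qed

definition diag_cons :: "'a::zero \<Rightarrow> nat \<Rightarrow> 'a mat \<Rightarrow> 'a mat" where
  "diag_cons a n M = mat (Suc n) (Suc n) (\<lambda>(i,j).
     if i = 0 then (if j = 0 then a else 0) else if j = 0 then 0 else M $$ (i - 1, j - 1))"

lemma diag_cons_carrier [simp]: "diag_cons a n M \<in> carrier_mat (Suc n) (Suc n)"
  and dim_diag_cons [simp]: "dim_row (diag_cons a n M) = Suc n" "dim_col (diag_cons a n M) = Suc n"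
  unfolding diag_cons_def by simp_all

lemma diag_cons_index:
  "i < Suc n \<Longrightarrow> j < Suc n \<Longrightarrow> diag_cons a n M $$ (i,j) =
     (if i = 0 then (if j = 0 then a else 0) else if j = 0 then 0 else M $$ (i - 1, j - 1))"
  unfolding diag_cons_def by simp

lemma diag_cons_mult:
  fixes M M' :: "'a::semiring_0 mat"
  assumes M: "M \<in> carrier_mat n n" and M': "M' \<in> carrier_mat n n"
  shows "diag_cons a n M * diag_cons b n M' = diag_cons (a * b) n (M * M')"
proof (rule eq_matI)
  fix i j assume "i < dim_row (diag_cons (a * b) n (M * M'))" "j < dim_col (diag_cons (a * b) n (M * M'))"
  hence i: "i < Suc n" and j: "j < Suc n" by auto
  have "(diag_cons a n M * diag_cons b n M') $$ (i,j)
      = (\<Sum>k\<in>{0..<Suc n}. diag_cons a n M $$ (i,k) * diag_cons b n M' $$ (k,j))"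
    using i j by (simp add: scalar_prod_def)
  also have "\<dots> = diag_cons a n M $$ (i,0) * diag_cons b n M' $$ (0,j)
      + (\<Sum>k\<in>{0..<n}. diag_cons a n M $$ (i, Suc k) * diag_cons b n M' $$ (Suc k, j))"
    by (simp add: sum.atLeast0_lessThan_Suc_shift del: sum.op_ivl_Suc)
  also have "\<dots> = diag_cons (a * b) n (M * M') $$ (i,j)"
    using i j M M' by (cases i; cases j) (auto simp: diag_cons_index scalar_prod_def)
  finally show "(diag_cons a n M * diag_cons b n M') $$ (i,j) = diag_cons (a * b) n (M * M') $$ (i,j)" .
qed auto

lemma transpose_diag_cons:
  "M \<in> carrier_mat n n \<Longrightarrow> transpose_mat (diag_cons a n M) = diag_cons a n (transpose_mat M)"
  by (rule eq_matI) (auto simp: diag_cons_def)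

lemma diag_cons_one: "diag_cons 1 n (1\<^sub>m n) = (1\<^sub>m (Suc n) :: 'a::semiring_1 mat)"
  by (rule eq_matI) (auto simp: diag_cons_def)

lemma mat_diag_Cons:
  "length ds = n \<Longrightarrow> mat_diag (Suc n) ((!) (a # ds)) = diag_cons a n (mat_diag n ((!) ds))"
  by (rule eq_matI) (auto simp: diag_cons_def mat_diag_def nth_Cons')

lemma orthogonal_matrix_diag_cons:
  assumes "orthogonal_matrix n U"
  shows "orthogonal_matrix (Suc n) (diag_cons 1 n (U :: 'a::comm_ring_1 mat))"
  using assms unfolding orthogonal_matrix_def
  by (auto simp: transpose_diag_cons diag_cons_mult diag_cons_one)

lemma char_poly_orthogonally_diagonalized:
  fixes A :: "'a::comm_ring_1 mat"
  assumes A: "A \<in> carrier_mat n n" and U: "orthogonal_matrix n U"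
    and len: "length ds = n" and AU: "A * U = U * mat_diag n ((!) ds)"
  shows "char_poly A = (\<Prod>d\<leftarrow>ds. [:- d, 1:])"
proof -
  have Uc: "U \<in> carrier_mat n n" and UUt: "U * transpose_mat U = 1\<^sub>m n"
    and UtU: "transpose_mat U * U = 1\<^sub>m n" using U unfolding orthogonal_matrix_def by auto
  have "A = A * (U * transpose_mat U)" using A UUt by simp
  also have "\<dots> = U * mat_diag n ((!) ds) * transpose_mat U"
    using A Uc by (simp add: AU[symmetric] assoc_mult_mat[of _ n n _ n _ n])
  finally have "A = U * mat_diag n ((!) ds) * transpose_mat U" .
  hence "similar_mat A (mat_diag n ((!) ds))"
    by (intro similar_matI[OF _ UUt UtU]) (use A Uc in auto)
  hence "char_poly A = char_poly (mat_diag n ((!) ds))" by (rule char_poly_similar)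
  also have "\<dots> = (\<Prod>a\<leftarrow>diag_mat (mat_diag n ((!) ds)). [:- a, 1:])"
    by (rule char_poly_upper_triangular) (auto simp: upper_triangular_def mat_diag_def)
  also have "diag_mat (mat_diag n ((!) ds)) = ds"
    using len by (auto simp: diag_mat_def mat_diag_def intro!: nth_equalityI)
  finally show ?thesis .
qed

lemma proots_prod_linear_factors: "proots (\<Prod>d\<leftarrow>ds. [:- d, 1:]) = mset ds"
proof (induction ds)
  case (Cons a ds)
  have "proots (\<Prod>d\<leftarrow>a # ds. [:- d, 1:]) = proots ([:- a, 1:] * (\<Prod>d\<leftarrow>ds. [:- d, 1:]))"
    by simp
  also have "\<dots> = proots [:- a, 1:] + proots (\<Prod>d\<leftarrow>ds. [:- d, 1:])"
    by (rule proots_mult) (auto simp: prod_list_zero_iff)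
  finally show ?case using Cons proots_linear_factor[of "-a"] by simp
qed simp

lemma eigvals_sorted_orthogonally_diagonalized:
  assumes "A \<in> carrier_mat n n" "orthogonal_matrix n U"
    and "length ds = n" "sorted ds" "A * U = U * mat_diag n ((!) ds)"
  shows "eigvals_sorted A = ds"
  using assms by (simp add: eigvals_sorted_def char_poly_orthogonally_diagonalized
      proots_prod_linear_factors sorted_sort_id)

text \<open>Eigenvalues of a real symmetric matrix are real: for an eigenvector \<open>v\<close> of the complexified
  matrix, the Rayleigh quotient \<open>v\<^sup>* A v / v\<^sup>* v\<close> is its own conjugate.\<close>

lemma symmetric_char_poly_has_real_root:
  fixes A :: "real mat"
  assumes A: "A \<in> carrier_mat n n" and sym: "transpose_mat A = A" and n: "n > 0"
  shows "\<exists>r. poly (char_poly A) r = 0"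
proof -
  define Ac where "Ac = map_mat complex_of_real A"
  have Ac: "Ac \<in> carrier_mat n n" using A unfolding Ac_def by auto
  have Aij: "A $$ (j,i) = A $$ (i,j)" if "i < n" "j < n" for i j
    using that A by (metis carrier_matD index_transpose_mat(1) sym)
  obtain as where cp: "char_poly Ac = (\<Prod>a\<leftarrow>as. [:- a, 1:])" and "length as = n"
    using char_poly_factorized[OF Ac] by blast
  then obtain a where "a \<in> set as" using n by (cases as) auto
  hence root: "poly (char_poly Ac) a = 0"
    unfolding cp poly_prod_list by (auto simp: prod_list_zero_iff)
  then obtain v where "eigenvector Ac v a"
    using eigenvalue_root_char_poly[OF Ac] unfolding eigenvalue_def by blast
  hence v: "v \<in> carrier_vec n" and v0: "v \<noteq> 0\<^sub>v n" and Av: "Ac *\<^sub>v v = a \<cdot>\<^sub>v v"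
    using Ac unfolding eigenvector_def by auto
  have row: "(\<Sum>j<n. of_real (A $$ (i,j)) * v $ j) = a * v $ i" if "i < n" for i
  proof -
    have "(Ac *\<^sub>v v) $ i = a * v $ i" using Av that v by simp
    thus ?thesis using that A v unfolding Ac_def
      by (simp add: mult_mat_vec_def scalar_prod_def atLeast0LessThan)
  qed
  define S where "S = (\<Sum>i<n. cnj (v $ i) * (\<Sum>j<n. of_real (A $$ (i,j)) * v $ j))"
  define T where "T = (\<Sum>i<n. cnj (v $ i) * v $ i)"
  have ST: "S = a * T" unfolding S_def T_def using row
    by (simp add: sum_distrib_left mult.commute mult.left_commute)
  have "cnj S = (\<Sum>i<n. \<Sum>j<n. of_real (A $$ (i,j)) * cnj (v $ j) * v $ i)"
    unfolding S_def by (simp add: sum_distrib_left mult_ac)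
  also have "\<dots> = (\<Sum>j<n. \<Sum>i<n. of_real (A $$ (i,j)) * cnj (v $ j) * v $ i)"
    by (rule sum.swap)
  also have "\<dots> = S" unfolding S_def
    by (auto simp: sum_distrib_left mult_ac Aij intro!: sum.cong)
  finally have cS: "cnj S = S" .
  have Treal: "T = of_real (\<Sum>i<n. (cmod (v $ i))^2)" unfolding T_def
    by (simp add: complex_norm_square mult.commute del: of_real_power)
  obtain i0 where i0: "i0 < n" "v $ i0 \<noteq> 0"
    using v v0 by (metis eq_vecI carrier_vecD index_zero_vec)
  have "(\<Sum>i<n. (cmod (v $ i))^2) > 0"
    by (rule sum_pos2[of _ i0]) (use i0 in auto)
  hence T0: "T \<noteq> 0" and cT: "cnj T = T"
    unfolding Treal by (auto simp del: of_real_sum of_real_power)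
  have "cnj a = a" using ST T0 cS cT by (metis complex_cnj_divide nonzero_mult_div_cancel_right)
  hence "a = of_real (Re a)" by (auto simp: complex_eq_iff)
  hence "poly (map_poly complex_of_real (char_poly A)) (of_real (Re a)) = 0"
    using root unfolding Ac_def of_real_hom.char_poly_hom[OF A] by simp
  thus ?thesis by auto
qed

lemma unit_eigenvector_exists:
  fixes A :: "real mat"
  assumes A: "A \<in> carrier_mat n n" and root: "poly (char_poly A) \<mu> = 0"
  obtains w where "w \<in> carrier_vec n" "w \<bullet> w = 1" "A *\<^sub>v w = \<mu> \<cdot>\<^sub>v w"
proof -
  obtain v where "eigenvector A v \<mu>"
    using root eigenvalue_root_char_poly[OF A] unfolding eigenvalue_def by blast
  hence v: "v \<in> carrier_vec n" and v0: "v \<noteq> 0\<^sub>v n" and Av: "A *\<^sub>v v = \<mu> \<cdot>\<^sub>v v"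
    using A unfolding eigenvector_def by auto
  obtain i0 where i0: "i0 < n" "v $ i0 \<noteq> 0"
    using v v0 by (metis eq_vecI carrier_vecD index_zero_vec)
  have "v \<bullet> v = (\<Sum>i<n. (v $ i)^2)"
    using v by (simp add: scalar_prod_def atLeast0LessThan power2_eq_square)
  also have "\<dots> > 0" by (rule sum_pos2[of _ i0]) (use i0 in auto)
  finally have vv: "v \<bullet> v > 0" .
  define w where "w = (1 / sqrt (v \<bullet> v)) \<cdot>\<^sub>v v"
  show ?thesis
  proof (rule that[of w])
    show "w \<bullet> w = 1"
      unfolding w_def using v vv by (simp add: power2_eq_square[symmetric])
    show "A *\<^sub>v w = \<mu> \<cdot>\<^sub>v w"
      unfolding w_def using A v Av by (simp add: mult_mat_vec smult_smult_assoc mult.commute)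
  qed (use v in \<open>simp add: w_def\<close>)
qed

text \<open>\<open>H = I - 2 u u\<^sup>T / \<parallel>u\<parallel>\<^sup>2\<close> with \<open>u = w - e\<^sub>0\<close>; when \<open>w = e\<^sub>0\<close> the junk value
  \<open>2 / 0 = 0\<close> makes \<open>H\<close> the identity, which is again correct.\<close>

lemma householder_reflection_exists:
  fixes w :: "real vec"
  assumes w: "w \<in> carrier_vec m" and ww: "w \<bullet> w = 1" and m: "m > 0"
  obtains H where "orthogonal_matrix m H" "transpose_mat H = H" "\<And>i. i < m \<Longrightarrow> H $$ (i,0) = w $ i"
proof -
  define u where "u k = w $ k - (if k = 0 then 1 else 0)" for k
  define S where "S = (\<Sum>k<m. (u k)^2)"
  define c where "c = 2 / S"
  define H where "H = mat m m (\<lambda>(i,j). (if i = j then 1 else 0) - c * u i * u j)"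
  have Hc: "H \<in> carrier_mat m m" unfolding H_def by simp
  have HT: "transpose_mat H = H" unfolding H_def by (rule eq_matI) auto
  have cS: "c^2 * S = 2 * c"
    by (cases "S = 0") (simp_all add: c_def power2_eq_square)
  have HH: "H * H = 1\<^sub>m m"
  proof (rule eq_matI)
    fix i j assume "i < dim_row (1\<^sub>m m)" "j < dim_col (1\<^sub>m m)"
    hence ij: "i < m" "j < m" by auto
    have expand: "((if i = k then 1 else 0) - c * u i * u k) * ((if k = j then 1 else 0) - c * u k * u j)
        = (if k = i then (if i = j then 1 else 0) else 0)
          - (if k = i then c * u i * u j else 0) - (if k = j then c * u i * u j else 0)
          + c^2 * u i * u j * (u k)^2" for k
      by (auto simp: algebra_simps power2_eq_square)
    have "(H * H) $$ (i,j) = (\<Sum>k<m. H $$ (i,k) * H $$ (k,j))"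
      using ij Hc by (simp add: scalar_prod_def atLeast0LessThan)
    also have "\<dots> = (\<Sum>k<m. ((if i = k then 1 else 0) - c * u i * u k) * ((if k = j then 1 else 0) - c * u k * u j))"
      using ij by (intro sum.cong) (auto simp: H_def)
    also have "\<dots> = (\<Sum>k<m. (if k = i then (if i = j then 1 else 0) else 0)
          - (if k = i then c * u i * u j else 0) - (if k = j then c * u i * u j else 0)
          + c^2 * u i * u j * (u k)^2)"
      by (simp only: expand)
    also have "\<dots> = (if i = j then 1 else 0) - 2 * c * u i * u j + c^2 * S * u i * u j"
      using ij by (simp add: sum.distrib sum_subtractf sum_distrib_left[symmetric] S_def mult_ac)
    also have "\<dots> = 1\<^sub>m m $$ (i,j)" using cS ij by simp
    finally show "(H * H) $$ (i,j) = 1\<^sub>m m $$ (i,j)" .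
  qed (use Hc in auto)
  have col0: "H $$ (i,0) = w $ i" if i: "i < m" for i
  proof (cases "S = 0")
    case True
    hence "\<forall>k\<in>{..<m}. (u k)^2 = 0" unfolding S_def by (subst sum_nonneg_eq_0_iff[symmetric]) auto
    hence "u i = 0" using i by auto
    thus ?thesis using i m by (simp add: H_def c_def True u_def)
  next
    case False
    have "S = (\<Sum>k<m. (w $ k)^2) - 2 * w $ 0 + 1"
    proof -
      have "S = (\<Sum>k<m. (w $ k)^2 - 2 * (if k = 0 then w $ k else 0) + (if k = 0 then 1 else 0))"
        unfolding S_def u_def by (intro sum.cong) (auto simp: power2_eq_square algebra_simps)
      also have "\<dots> = (\<Sum>k<m. (w $ k)^2) - 2 * w $ 0 + 1"
        using m by (simp add: sum.distrib sum_subtractf sum_distrib_left[symmetric])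
      finally show ?thesis .
    qed
    also have "(\<Sum>k<m. (w $ k)^2) = 1"
      using ww w by (simp add: scalar_prod_def atLeast0LessThan power2_eq_square)
    finally have "c * u 0 = -1" using False by (simp add: c_def u_def field_simps)
    hence "c * u i * u 0 = - u i" by (metis mult.commute mult.left_commute mult_minus1_right)
    thus ?thesis using i m by (simp add: H_def u_def)
  qed
  show ?thesis
    by (rule that[OF _ HT col0]) (use Hc HH HT in \<open>simp_all add: orthogonal_matrix_def\<close>)
qed

lemma symmetric_deflation:
  fixes A :: "real mat"
  assumes A: "A \<in> carrier_mat (Suc n) (Suc n)" and sym: "transpose_mat A = A"
    and w: "w \<in> carrier_vec (Suc n)" "w \<bullet> w = 1" and Aw: "A *\<^sub>v w = \<mu> \<cdot>\<^sub>v w"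
  obtains H B where "orthogonal_matrix (Suc n) H" "B \<in> carrier_mat n n" "transpose_mat B = B"
    "transpose_mat H * A * H = diag_cons \<mu> n B"
proof -
  obtain H where H: "orthogonal_matrix (Suc n) H" and HT: "transpose_mat H = H"
    and Hcol: "\<And>i. i < Suc n \<Longrightarrow> H $$ (i,0) = w $ i"
    using householder_reflection_exists[OF w] by blast
  have Hc: "H \<in> carrier_mat (Suc n) (Suc n)" and HH: "H * H = 1\<^sub>m (Suc n)"
    using H HT unfolding orthogonal_matrix_def by auto
  define e0 :: "real vec" where "e0 = unit_vec (Suc n) 0"
  have e0: "e0 \<in> carrier_vec (Suc n)" unfolding e0_def by simp
  have He0: "H *\<^sub>v e0 = w"
    by (rule eq_vecI) (use Hc w Hcol in \<open>auto simp: e0_def\<close>)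
  define C where "C = H * A * H"
  have Cc: "C \<in> carrier_mat (Suc n) (Suc n)" unfolding C_def using Hc A by simp
  have CT: "transpose_mat C = C"
  proof -
    have AH: "A * H \<in> carrier_mat (Suc n) (Suc n)" using A Hc by simp
    have "transpose_mat C = transpose_mat (H * (A * H))" unfolding C_def using A Hc by simp
    also have "\<dots> = transpose_mat (A * H) * transpose_mat H" by (rule transpose_mult[OF Hc AH])
    also have "transpose_mat (A * H) = transpose_mat H * transpose_mat A" by (rule transpose_mult[OF A Hc])
    finally show ?thesis unfolding HT sym C_def using Hc A by simp
  qed
  have "C *\<^sub>v e0 = H *\<^sub>v (A *\<^sub>v (H *\<^sub>v e0))"
    unfolding C_def using Hc A e0 by (simp add: assoc_mult_mat_vec[of _ "Suc n" "Suc n" _ "Suc n"])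
  also have "\<dots> = \<mu> \<cdot>\<^sub>v ((H * H) *\<^sub>v e0)"
    using Hc w e0 by (simp add: He0 Aw mult_mat_vec)
  finally have Ce0: "C *\<^sub>v e0 = \<mu> \<cdot>\<^sub>v e0" using e0 by (simp add: HH)
  have Ccol: "C $$ (i,0) = (if i = 0 then \<mu> else 0)" if "i < Suc n" for i
  proof -
    have "C $$ (i,0) = (C *\<^sub>v e0) $ i" using Cc that by (simp add: e0_def)
    also have "\<dots> = (\<mu> \<cdot>\<^sub>v e0) $ i" by (simp only: Ce0)
    finally show ?thesis using that by (simp add: e0_def)
  qed
  have Csym: "C $$ (i,j) = C $$ (j,i)" if "i < Suc n" "j < Suc n" for i j
    using that Cc CT by (metis carrier_matD index_transpose_mat(1))
  define B where "B = mat n n (\<lambda>(i,j). C $$ (Suc i, Suc j))"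
  show ?thesis
  proof (rule that[OF H])
    show "B \<in> carrier_mat n n" unfolding B_def by simp
    show "transpose_mat B = B" unfolding B_def by (rule eq_matI) (auto intro: Csym)
    show "transpose_mat H * A * H = diag_cons \<mu> n B"
      unfolding HT C_def[symmetric]
      by (rule eq_matI) (use Cc Ccol Csym in \<open>auto simp: diag_cons_index B_def\<close>)
  qed
qed

text \<open>The eigenvalues come out sorted because every step deflates the smallest root of the
  characteristic polynomial.\<close>

theorem symmetric_orthogonally_diagonalizable:
  fixes A :: "real mat"
  assumes "A \<in> carrier_mat n n" "transpose_mat A = A"
  shows "\<exists>U ds. orthogonal_matrix n U \<and> length ds = n \<and> sorted ds \<and> A * U = U * mat_diag n ((!) ds)"
  using assms
proof (induction n arbitrary: A)
  case 0
  have "orthogonal_matrix 0 (1\<^sub>m 0 :: real mat)" by (simp add: orthogonal_matrix_def)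
  thus ?case using 0 by (intro exI[of _ "1\<^sub>m 0"] exI[of _ "[]"]) (auto intro!: eq_matI simp: mat_diag_def)
next
  case (Suc n A)
  note A = Suc.prems(1)
  let ?p = "char_poly A"
  define R where "R = {r. poly ?p r = 0}"
  have "?p \<noteq> 0" using degree_monic_char_poly[OF A] by auto
  hence "finite R" unfolding R_def by (rule poly_roots_finite)
  moreover have "R \<noteq> {}"
    unfolding R_def using symmetric_char_poly_has_real_root[OF A Suc.prems(2)] by auto
  ultimately have muR: "Min R \<in> R" and mu_le: "\<And>r. r \<in> R \<Longrightarrow> Min R \<le> r" by simp_all
  define \<mu> where "\<mu> = Min R"
  obtain w where w: "w \<in> carrier_vec (Suc n)" "w \<bullet> w = 1" and Aw: "A *\<^sub>v w = \<mu> \<cdot>\<^sub>v w"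
    using unit_eigenvector_exists[OF A] muR unfolding R_def \<mu>_def by blast
  obtain H B where H: "orthogonal_matrix (Suc n) H" and Bc: "B \<in> carrier_mat n n"
    and BT: "transpose_mat B = B" and HAH: "transpose_mat H * A * H = diag_cons \<mu> n B"
    using symmetric_deflation[OF A Suc.prems(2) w Aw] by blast
  obtain V es where V: "orthogonal_matrix n V" and len: "length es = n" and srt: "sorted es"
    and BV: "B * V = V * mat_diag n ((!) es)"
    using Suc.IH[OF Bc BT] by blast
  have Hc: "H \<in> carrier_mat (Suc n) (Suc n)" and HHt: "H * transpose_mat H = 1\<^sub>m (Suc n)"
    using H unfolding orthogonal_matrix_def by auto
  have Vc: "V \<in> carrier_mat n n" using V unfolding orthogonal_matrix_def by auto
  have De: "mat_diag n ((!) es) \<in> carrier_mat n n" by simp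
  define U where "U = H * diag_cons 1 n V"
  have AH: "A * H = H * diag_cons \<mu> n B"
  proof -
    have "A * H = H * transpose_mat H * A * H" using A Hc by (simp add: HHt)
    also have "\<dots> = H * (transpose_mat H * A * H)"
      using A Hc by (simp add: assoc_mult_mat[of _ "Suc n" "Suc n" _ "Suc n" _ "Suc n"])
    finally show ?thesis by (simp add: HAH)
  qed
  have "A * U = (A * H) * diag_cons 1 n V"
    unfolding U_def by (rule assoc_mult_mat[OF A Hc diag_cons_carrier, symmetric])
  also have "\<dots> = H * (diag_cons \<mu> n B * diag_cons 1 n V)"
    unfolding AH by (rule assoc_mult_mat[OF Hc diag_cons_carrier diag_cons_carrier])
  also have "\<dots> = H * (diag_cons 1 n V * diag_cons \<mu> n (mat_diag n ((!) es)))"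
    using Bc Vc De by (simp add: diag_cons_mult BV)
  also have "\<dots> = U * diag_cons \<mu> n (mat_diag n ((!) es))"
    unfolding U_def by (rule assoc_mult_mat[OF Hc diag_cons_carrier diag_cons_carrier, symmetric])
  also have "\<dots> = U * mat_diag (Suc n) ((!) (\<mu> # es))" using len by (simp add: mat_diag_Cons)
  finally have AU: "A * U = U * mat_diag (Suc n) ((!) (\<mu> # es))" .
  have U: "orthogonal_matrix (Suc n) U"
    unfolding U_def by (intro orthogonal_matrix_mult H orthogonal_matrix_diag_cons V)
  have "?p = (\<Prod>d\<leftarrow>\<mu> # es. [:- d, 1:])"
    using char_poly_orthogonally_diagonalized[OF A U _ AU] len by simp
  hence "\<forall>e\<in>set es. e \<in> R"
    unfolding R_def by (auto simp: poly_prod_list prod_list_zero_iff)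
  hence "sorted (\<mu> # es)" using srt mu_le unfolding \<mu>_def by simp
  thus ?case using U AU len by (intro exI[of _ U] exI[of _ "\<mu> # es"]) simp
qed

section \<open>Weyl's inequality for the second eigenvalue\<close>

lemma orthogonal_diagonal_quadratic_form:
  fixes A U :: "real mat"
  assumes A: "A \<in> carrier_mat n n" and U: "orthogonal_matrix n U"
    and len: "length ds = n" and AU: "A * U = U * mat_diag n ((!) ds)"
    and y: "y \<in> carrier_vec n"
  shows "(U *\<^sub>v y) \<bullet> (A *\<^sub>v (U *\<^sub>v y)) = (\<Sum>i<n. ds ! i * (y $ i)^2)"
    and "(U *\<^sub>v y) \<bullet> (U *\<^sub>v y) = (\<Sum>i<n. (y $ i)^2)"
proof -
  let ?x = "U *\<^sub>v y"
  have Uc: "U \<in> carrier_mat n n" and UtU: "transpose_mat U * U = 1\<^sub>m n"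
    using U unfolding orthogonal_matrix_def by auto
  have x: "?x \<in> carrier_vec n" using Uc y by simp
  have UtUy: "transpose_mat U *\<^sub>v ?x = y"
    using assoc_mult_mat_vec[OF _ Uc y, of "transpose_mat U"] Uc UtU y by simp
  have Dy: "mat_diag n ((!) ds) *\<^sub>v y = vec n (\<lambda>i. ds ! i * y $ i)"
  proof (rule eq_vecI)
    fix i assume "i < dim_vec (vec n (\<lambda>i. ds ! i * y $ i))"
    hence i: "i < n" by simp
    have "(mat_diag n ((!) ds) *\<^sub>v y) $ i = (\<Sum>j\<in>{0..<n}. (if i = j then ds ! j else 0) * y $ j)"
      using i y by (simp add: mat_diag_def scalar_prod_def)
    also have "\<dots> = (\<Sum>j\<in>{0..<n}. if j = i then ds ! i * y $ i else 0)"
      by (intro sum.cong) auto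
    finally show "(mat_diag n ((!) ds) *\<^sub>v y) $ i = vec n (\<lambda>i. ds ! i * y $ i) $ i" using i by simp
  qed (simp add: mat_diag_def)
  have "?x \<bullet> (A *\<^sub>v ?x) = ?x \<bullet> ((A * U) *\<^sub>v y)" using A Uc y by simp
  also have "\<dots> = ?x \<bullet> (U *\<^sub>v (mat_diag n ((!) ds) *\<^sub>v y))"
    unfolding AU by (simp add: assoc_mult_mat_vec[OF Uc mat_diag_dim y])
  also have "\<dots> = (transpose_mat U *\<^sub>v ?x) \<bullet> (mat_diag n ((!) ds) *\<^sub>v y)"
    using transpose_vec_mult_scalar[OF Uc _ x, of "mat_diag n ((!) ds) *\<^sub>v y"] mat_diag_dim y
    by (metis mult_mat_vec_carrier)
  also have "\<dots> = (\<Sum>i<n. ds ! i * (y $ i)^2)"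
    unfolding UtUy Dy using y by (simp add: scalar_prod_def atLeast0LessThan power2_eq_square mult_ac)
  finally show "?x \<bullet> (A *\<^sub>v ?x) = (\<Sum>i<n. ds ! i * (y $ i)^2)" .
  have "?x \<bullet> ?x = (transpose_mat U *\<^sub>v ?x) \<bullet> y"
    using transpose_vec_mult_scalar[OF Uc y x] by simp
  also have "\<dots> = (\<Sum>i<n. (y $ i)^2)" unfolding UtUy using y
    by (simp add: scalar_prod_def atLeast0LessThan power2_eq_square)
  finally show "?x \<bullet> ?x = (\<Sum>i<n. (y $ i)^2)" .
qed

text \<open>The two halves of the Courant--Fischer characterisation of \<open>ds ! k\<close>.\<close>

lemma rayleigh_le_on_leading_eigenvectors:
  fixes A U :: "real mat"
  assumes A: "A \<in> carrier_mat n n" and U: "orthogonal_matrix n U"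
    and len: "length ds = n" and srt: "sorted ds" and AU: "A * U = U * mat_diag n ((!) ds)"
    and y: "y \<in> carrier_vec n" and k: "k < n" and supp: "\<And>i. k < i \<Longrightarrow> i < n \<Longrightarrow> y $ i = 0"
  shows "(U *\<^sub>v y) \<bullet> (A *\<^sub>v (U *\<^sub>v y)) \<le> ds ! k * ((U *\<^sub>v y) \<bullet> (U *\<^sub>v y))"
proof -
  have "(\<Sum>i<n. ds ! i * (y $ i)^2) \<le> (\<Sum>i<n. ds ! k * (y $ i)^2)"
  proof (rule sum_mono)
    fix i assume i: "i \<in> {..<n}"
    show "ds ! i * (y $ i)^2 \<le> ds ! k * (y $ i)^2"
    proof (cases "k < i")
      case False
      hence "ds ! i \<le> ds ! k" using k len srt by (intro sorted_nth_mono) auto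
      thus ?thesis by (intro mult_right_mono) auto
    qed (use i supp in simp)
  qed
  thus ?thesis
    unfolding orthogonal_diagonal_quadratic_form[OF A U len AU y] by (simp add: sum_distrib_left)
qed

lemma rayleigh_ge_off_leading_eigenvectors:
  fixes A U :: "real mat"
  assumes A: "A \<in> carrier_mat n n" and U: "orthogonal_matrix n U"
    and len: "length ds = n" and srt: "sorted ds" and AU: "A * U = U * mat_diag n ((!) ds)"
    and z: "z \<in> carrier_vec n" and supp: "\<And>i. i < k \<Longrightarrow> z $ i = 0"
  shows "ds ! k * ((U *\<^sub>v z) \<bullet> (U *\<^sub>v z)) \<le> (U *\<^sub>v z) \<bullet> (A *\<^sub>v (U *\<^sub>v z))"
proof -
  have "(\<Sum>i<n. ds ! k * (z $ i)^2) \<le> (\<Sum>i<n. ds ! i * (z $ i)^2)"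
  proof (rule sum_mono)
    fix i assume i: "i \<in> {..<n}"
    show "ds ! k * (z $ i)^2 \<le> ds ! i * (z $ i)^2"
    proof (cases "i < k")
      case False
      hence "ds ! k \<le> ds ! i" using i len srt by (intro sorted_nth_mono) auto
      thus ?thesis by (intro mult_right_mono) auto
    qed (simp add: supp)
  qed
  thus ?thesis
    unfolding orthogonal_diagonal_quadratic_form[OF A U len AU z] by (simp add: sum_distrib_left)
qed

lemma frob_nonneg: "frob m n M \<ge> 0"
  unfolding frob_def by (auto intro!: sum_nonneg)

lemma abs_index_le_frob: "i < m \<Longrightarrow> j < n \<Longrightarrow> \<bar>M $$ (i,j)\<bar> \<le> frob m n M"
proof -
  assume ij: "i < m" "j < n"
  have "(M $$ (i,j))^2 \<le> (\<Sum>j'<n. (M $$ (i,j'))^2)"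
    using ij by (intro member_le_sum) auto
  also have "\<dots> \<le> (\<Sum>i'<m. \<Sum>j'<n. (M $$ (i',j'))^2)"
    using ij by (intro member_le_sum) (auto intro: sum_nonneg)
  finally show ?thesis unfolding frob_def using real_sqrt_le_mono real_sqrt_abs by metis
qed

lemma frob_minus_commute:
  "A \<in> carrier_mat m n \<Longrightarrow> B \<in> carrier_mat m n \<Longrightarrow> frob m n (A - B) = frob m n (B - A)"
  unfolding frob_def by (auto intro!: arg_cong[where f=sqrt] sum.cong simp: power2_commute)

lemma quadratic_form_le_frob:
  fixes E :: "real mat"
  assumes E: "E \<in> carrier_mat n n" and x: "x \<in> carrier_vec n"
  shows "x \<bullet> (E *\<^sub>v x) \<le> real n * frob n n E * (x \<bullet> x)"
proof -
  let ?F = "frob n n E"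
  have "x \<bullet> (E *\<^sub>v x) = (\<Sum>i<n. \<Sum>j<n. E $$ (i,j) * x $ i * x $ j)"
    using E x by (simp add: scalar_prod_def atLeast0LessThan sum_distrib_left mult_ac)
  also have "\<dots> \<le> (\<Sum>i<n. \<Sum>j<n. ?F * (((x $ i)^2 + (x $ j)^2) / 2))"
  proof (intro sum_mono)
    fix i j assume ij: "i \<in> {..<n}" "j \<in> {..<n}"
    have "E $$ (i,j) * x $ i * x $ j \<le> \<bar>E $$ (i,j)\<bar> * \<bar>x $ i * x $ j\<bar>"
      by (metis abs_ge_self abs_mult mult.assoc)
    also have "\<dots> \<le> ?F * (((x $ i)^2 + (x $ j)^2) / 2)"
    proof (rule mult_mono)
      show "\<bar>E $$ (i,j)\<bar> \<le> ?F" using ij abs_index_le_frob by auto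
      have "0 \<le> (\<bar>x $ i\<bar> - \<bar>x $ j\<bar>)^2" by simp
      thus "\<bar>x $ i * x $ j\<bar> \<le> ((x $ i)^2 + (x $ j)^2) / 2"
        by (simp add: power2_eq_square algebra_simps abs_mult)
    qed (use frob_nonneg in auto)
    finally show "E $$ (i,j) * x $ i * x $ j \<le> ?F * (((x $ i)^2 + (x $ j)^2) / 2)" .
  qed
  also have "\<dots> = ?F / 2 * (\<Sum>i<n. \<Sum>j<n. (x $ i)^2 + (x $ j)^2)"
    by (simp add: sum_distrib_left sum_divide_distrib)
  also have "(\<Sum>i<n. \<Sum>j<n. (x $ i)^2 + (x $ j)^2) = 2 * real n * (\<Sum>i<n. (x $ i)^2)"
    by (simp add: sum.distrib sum_distrib_left[symmetric] sum.swap[of _ "{..<n}" "{..<n}"] algebra_simps)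
  also have "(\<Sum>i<n. (x $ i)^2) = x \<bullet> x" using x
    by (simp add: scalar_prod_def atLeast0LessThan power2_eq_square)
  finally show ?thesis by (simp add: algebra_simps)
qed

lemma exists_two_coordinate_vector_orthogonal_to_first_row:
  fixes C :: "real mat"
  assumes C: "C \<in> carrier_mat n n" and n: "n \<ge> 2"
  obtains y where "y \<in> carrier_vec n" "(\<Sum>i<n. (y $ i)^2) > 0"
    "\<And>i. 1 < i \<Longrightarrow> i < n \<Longrightarrow> y $ i = 0" "(C *\<^sub>v y) $ 0 = 0"
proof -
  obtain a b :: real where ab: "a \<noteq> 0 \<or> b \<noteq> 0" and Cab: "C $$ (0,0) * a + C $$ (0,1) * b = 0"
  proof (cases "C $$ (0,0) = 0 \<and> C $$ (0,1) = 0")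
    case True thus ?thesis using that[of 1 0] by simp
  next
    case False thus ?thesis using that[of "C $$ (0,1)" "- C $$ (0,0)"] by (auto simp: mult.commute)
  qed
  define y :: "real vec" where "y = vec n (\<lambda>i. if i = 0 then a else if i = 1 then b else 0)"
  have y: "y \<in> carrier_vec n" unfolding y_def by simp
  have y_nth: "y $ i = (if i = 0 then a else if i = 1 then b else 0)" if "i < n" for i
    using that unfolding y_def by simp
  have "(C *\<^sub>v y) $ 0 = (\<Sum>k\<in>{0..<n}. C $$ (0,k) * y $ k)"
    using n C y by (simp add: scalar_prod_def row_def)
  also have "\<dots> = (\<Sum>k\<in>{0..<n}. (if k = 0 then C $$ (0,0) * a else 0) + (if k = 1 then C $$ (0,1) * b else 0))"
    by (intro sum.cong) (simp_all add: y_nth)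
  also have "\<dots> = 0" using n Cab by (simp add: sum.distrib)
  finally have "(C *\<^sub>v y) $ 0 = 0" .
  moreover have "0 < (\<Sum>i<n. (y $ i)^2)"
  proof (rule sum_pos2)
    show "(if a \<noteq> 0 then 0 else 1) \<in> {..<n}" using n by simp
    show "0 < (y $ (if a \<noteq> 0 then 0 else 1))^2" using ab n by (simp add: y_nth)
  qed simp_all
  moreover have "y $ i = 0" if "1 < i" "i < n" for i using that by (simp add: y_nth)
  ultimately show ?thesis using that y by blast
qed

text \<open>The operator norm is bounded by \<open>n\<close> times the Frobenius norm. The test vector lies in
  the span of the two leading eigenvectors of \<open>A\<close> and is orthogonal to the leading eigenvector
  of \<open>B\<close>.\<close>

theorem eig_lambda2_le:
  fixes A B :: "real mat"
  assumes A: "A \<in> carrier_mat n n" and B: "B \<in> carrier_mat n n"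
    and sA: "transpose_mat A = A" and sB: "transpose_mat B = B" and n: "n \<ge> 2"
  shows "eig_lambda 2 B \<le> eig_lambda 2 A + real n * frob n n (B - A)"
proof -
  obtain U ds where U: "orthogonal_matrix n U" and lenA: "length ds = n" and srtA: "sorted ds"
    and AU: "A * U = U * mat_diag n ((!) ds)"
    using symmetric_orthogonally_diagonalizable[OF A sA] by blast
  obtain V es where V: "orthogonal_matrix n V" and lenB: "length es = n" and srtB: "sorted es"
    and BV: "B * V = V * mat_diag n ((!) es)"
    using symmetric_orthogonally_diagonalizable[OF B sB] by blast
  have Uc: "U \<in> carrier_mat n n" and Vc: "V \<in> carrier_mat n n"
    and VVt: "V * transpose_mat V = 1\<^sub>m n"
    using U V unfolding orthogonal_matrix_def by auto
  have Cc: "transpose_mat V * U \<in> carrier_mat n n" using Uc Vc by simp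
  obtain y where y: "y \<in> carrier_vec n" and y_pos: "(\<Sum>i<n. (y $ i)^2) > 0"
    and y_supp: "\<And>i. 1 < i \<Longrightarrow> i < n \<Longrightarrow> y $ i = 0"
    and y_orth: "(transpose_mat V * U *\<^sub>v y) $ 0 = 0"
    using exists_two_coordinate_vector_orthogonal_to_first_row[OF Cc n] by blast
  define x where "x = U *\<^sub>v y"
  have x: "x \<in> carrier_vec n" unfolding x_def using Uc y by simp
  define z where "z = transpose_mat V *\<^sub>v x"
  have z: "z \<in> carrier_vec n" unfolding z_def using Vc x by simp
  have xz: "V *\<^sub>v z = x"
    unfolding z_def using assoc_mult_mat_vec[OF Vc _ x, of "transpose_mat V"] Vc VVt x by simp
  have z0: "z $ 0 = 0"
    using y_orth assoc_mult_mat_vec[OF _ Uc y, of "transpose_mat V"] Vc unfolding z_def x_def by simp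
  have xx: "x \<bullet> x > 0"
    using y_pos unfolding x_def orthogonal_diagonal_quadratic_form(2)[OF A U lenA AU y] .
  have "es ! 1 * (x \<bullet> x) \<le> x \<bullet> (B *\<^sub>v x)"
    using rayleigh_ge_off_leading_eigenvectors[OF B V lenB srtB BV z, of 1] z0 unfolding xz by simp
  also have "\<dots> = x \<bullet> (A *\<^sub>v x) + x \<bullet> ((B - A) *\<^sub>v x)"
    using minus_mult_distrib_mat_vec[OF B A x] scalar_prod_minus_distrib[of x n "B *\<^sub>v x" "A *\<^sub>v x"]
      x A B by simp
  also have "\<dots> \<le> ds ! 1 * (x \<bullet> x) + real n * frob n n (B - A) * (x \<bullet> x)"
  proof (rule add_mono)
    show "x \<bullet> (A *\<^sub>v x) \<le> ds ! 1 * (x \<bullet> x)"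
      unfolding x_def using n by (intro rayleigh_le_on_leading_eigenvectors[OF A U lenA srtA AU y _ y_supp]) auto
    show "x \<bullet> ((B - A) *\<^sub>v x) \<le> real n * frob n n (B - A) * (x \<bullet> x)"
      by (rule quadratic_form_le_frob) (use A B x in auto)
  qed
  finally have "es ! 1 * (x \<bullet> x) \<le> (ds ! 1 + real n * frob n n (B - A)) * (x \<bullet> x)"
    by (simp add: algebra_simps)
  hence "es ! 1 \<le> ds ! 1 + real n * frob n n (B - A)" using xx by simp
  thus ?thesis
    unfolding eig_lambda_def eigvals_sorted_orthogonally_diagonalized[OF A U lenA srtA AU]
      eigvals_sorted_orthogonally_diagonalized[OF B V lenB srtB BV] by simp
qed

corollary abs_eig_lambda2_diff_le:
  fixes A B :: "real mat"
  assumes "A \<in> carrier_mat n n" "B \<in> carrier_mat n n"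
    and "transpose_mat A = A" "transpose_mat B = B" "n \<ge> 2"
  shows "\<bar>eig_lambda 2 A - eig_lambda 2 B\<bar> \<le> real n * frob n n (A - B)"
  using eig_lambda2_le[OF assms] eig_lambda2_le[OF assms(2,1,4,3,5)]
  unfolding frob_minus_commute[OF assms(1,2)] by linarith

section \<open>Lipschitz functions of matrices\<close>

lemma mat_lipschitz_onI:
  "(\<And>x y. x \<in> S \<Longrightarrow> y \<in> S \<Longrightarrow> \<bar>f x - f y\<bar> \<le> C * frob m n (x - y)) \<Longrightarrow> mat_lipschitz_on m n S f"
  unfolding mat_lipschitz_on_def by blast

lemma mat_lipschitz_onE:
  assumes "mat_lipschitz_on m n S f"
  obtains C where "C \<ge> 0" "\<And>x y. x \<in> S \<Longrightarrow> y \<in> S \<Longrightarrow> \<bar>f x - f y\<bar> \<le> C * frob m n (x - y)"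
proof -
  obtain C where C: "\<And>x y. x \<in> S \<Longrightarrow> y \<in> S \<Longrightarrow> \<bar>f x - f y\<bar> \<le> C * frob m n (x - y)"
    using assms unfolding mat_lipschitz_on_def by blast
  show ?thesis
  proof (rule that[of "\<bar>C\<bar>"])
    fix x y assume "x \<in> S" "y \<in> S"
    hence "\<bar>f x - f y\<bar> \<le> C * frob m n (x - y)" by (rule C)
    also have "\<dots> \<le> \<bar>C\<bar> * frob m n (x - y)" using frob_nonneg by (intro mult_right_mono) auto
    finally show "\<bar>f x - f y\<bar> \<le> \<bar>C\<bar> * frob m n (x - y)" .
  qed simp
qed

lemma mat_lipschitz_on_add:
  assumes "mat_lipschitz_on m n S f" "mat_lipschitz_on m n S g"
  shows "mat_lipschitz_on m n S (\<lambda>x. f x + g x)"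
proof -
  obtain C1 where 1: "\<And>x y. x \<in> S \<Longrightarrow> y \<in> S \<Longrightarrow> \<bar>f x - f y\<bar> \<le> C1 * frob m n (x - y)"
    using assms(1) by (rule mat_lipschitz_onE) blast
  obtain C2 where 2: "\<And>x y. x \<in> S \<Longrightarrow> y \<in> S \<Longrightarrow> \<bar>g x - g y\<bar> \<le> C2 * frob m n (x - y)"
    using assms(2) by (rule mat_lipschitz_onE) blast
  show ?thesis
  proof (rule mat_lipschitz_onI[of _ _ "C1 + C2"])
    fix x y assume "x \<in> S" "y \<in> S"
    hence "\<bar>f x - f y\<bar> + \<bar>g x - g y\<bar> \<le> C1 * frob m n (x - y) + C2 * frob m n (x - y)"
      using 1 2 by (intro add_mono) auto
    thus "\<bar>f x + g x - (f y + g y)\<bar> \<le> (C1 + C2) * frob m n (x - y)" by (simp add: algebra_simps)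
  qed
qed

lemma mat_lipschitz_on_sum:
  "finite I \<Longrightarrow> (\<And>i. i \<in> I \<Longrightarrow> mat_lipschitz_on m n S (f i)) \<Longrightarrow>
    mat_lipschitz_on m n S (\<lambda>x. \<Sum>i\<in>I. f i x)"
  by (induction I rule: finite_induct)
    (auto intro: mat_lipschitz_on_add mat_lipschitz_onI[of _ _ 0] simp: frob_nonneg)

lemma mat_lipschitz_on_index:
  assumes "S \<subseteq> carrier_mat m n" "i < m" "j < n"
  shows "mat_lipschitz_on m n S (\<lambda>x. x $$ (i,j))"
proof (rule mat_lipschitz_onI[of _ _ 1])
  fix x y assume "x \<in> S" "y \<in> S"
  hence "(x - y) $$ (i,j) = x $$ (i,j) - y $$ (i,j)" using assms by auto
  thus "\<bar>x $$ (i,j) - y $$ (i,j)\<bar> \<le> 1 * frob m n (x - y)"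
    using abs_index_le_frob[OF assms(2,3), of "x - y"] by simp
qed

lemma frob_le_of_abs_index_le:
  assumes M: "M \<in> carrier_mat p q" and le: "\<And>i j. i < p \<Longrightarrow> j < q \<Longrightarrow> \<bar>M $$ (i,j)\<bar> \<le> e"
  shows "frob p q M \<le> sqrt (real p * real q) * e"
proof (cases "p > 0 \<and> q > 0")
  case True
  hence e: "e \<ge> 0" using le[of 0 0] by auto
  have "(\<Sum>i<p. \<Sum>j<q. (M $$ (i,j))^2) \<le> (\<Sum>i<p. \<Sum>j<q. e^2)"
    using le by (intro sum_mono) (simp add: abs_le_square_iff[symmetric] e)
  also have "\<dots> = (sqrt (real p * real q) * e)^2" by (simp add: power_mult_distrib)
  finally have "frob p q M \<le> sqrt ((sqrt (real p * real q) * e)^2)"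
    unfolding frob_def by (rule real_sqrt_le_mono)
  thus ?thesis using e by simp
qed (auto simp: frob_def)

lemma frob_lipschitz_of_index_lipschitz:
  assumes F: "\<And>x. x \<in> S \<Longrightarrow> F x \<in> carrier_mat p q"
    and ent: "\<And>i j. i < p \<Longrightarrow> j < q \<Longrightarrow> mat_lipschitz_on m n S (\<lambda>x. F x $$ (i,j))"
  obtains C where "\<And>x y. x \<in> S \<Longrightarrow> y \<in> S \<Longrightarrow> frob p q (F x - F y) \<le> C * frob m n (x - y)"
proof -
  have "\<forall>ij\<in>{..<p} \<times> {..<q}. \<exists>C\<ge>0. \<forall>x\<in>S. \<forall>y\<in>S.
      \<bar>F x $$ ij - F y $$ ij\<bar> \<le> C * frob m n (x - y)"
  proof
    fix ij assume "ij \<in> {..<p} \<times> {..<q}"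
    then obtain i j where ij: "ij = (i,j)" "i < p" "j < q" by auto
    obtain C where "C \<ge> 0"
      "\<And>x y. x \<in> S \<Longrightarrow> y \<in> S \<Longrightarrow> \<bar>F x $$ (i,j) - F y $$ (i,j)\<bar> \<le> C * frob m n (x - y)"
      using ent[OF ij(2,3)] by (rule mat_lipschitz_onE) blast
    thus "\<exists>C\<ge>0. \<forall>x\<in>S. \<forall>y\<in>S. \<bar>F x $$ ij - F y $$ ij\<bar> \<le> C * frob m n (x - y)"
      unfolding ij by blast
  qed
  then obtain Cf where Cf: "\<And>ij. ij \<in> {..<p} \<times> {..<q} \<Longrightarrow> Cf ij \<ge> 0 \<and> (\<forall>x\<in>S. \<forall>y\<in>S.
      \<bar>F x $$ ij - F y $$ ij\<bar> \<le> Cf ij * frob m n (x - y))"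
    by metis
  define K where "K = (\<Sum>ij\<in>{..<p} \<times> {..<q}. Cf ij)"
  show ?thesis
  proof (rule that[of "sqrt (real p * real q) * K"])
    fix x y assume xy: "x \<in> S" "y \<in> S"
    have "frob p q (F x - F y) \<le> sqrt (real p * real q) * (K * frob m n (x - y))"
    proof (rule frob_le_of_abs_index_le)
      show "F x - F y \<in> carrier_mat p q" using F xy by (auto intro: minus_carrier_mat)
      fix i j assume ij: "i < p" "j < q"
      have "\<bar>(F x - F y) $$ (i,j)\<bar> = \<bar>F x $$ (i,j) - F y $$ (i,j)\<bar>" using F[OF xy(1)] F[OF xy(2)] ij by auto
      also have "\<dots> \<le> Cf (i,j) * frob m n (x - y)" using Cf[of "(i,j)"] ij xy by auto
      also have "\<dots> \<le> K * frob m n (x - y)"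
        unfolding K_def using Cf ij frob_nonneg by (intro mult_right_mono member_le_sum) auto
      finally show "\<bar>(F x - F y) $$ (i,j)\<bar> \<le> K * frob m n (x - y)" .
    qed
    thus "frob p q (F x - F y) \<le> sqrt (real p * real q) * K * frob m n (x - y)" by (simp add: mult_ac)
  qed
qed

lemma mat_lipschitz_on_compose:
  assumes g: "mat_lipschitz_on p q T g" and F: "\<And>x. x \<in> S \<Longrightarrow> F x \<in> T"
    and C: "\<And>x y. x \<in> S \<Longrightarrow> y \<in> S \<Longrightarrow> frob p q (F x - F y) \<le> C * frob m n (x - y)"
  shows "mat_lipschitz_on m n S (\<lambda>x. g (F x))"
proof -
  obtain D where D: "D \<ge> 0"
    "\<And>x y. x \<in> T \<Longrightarrow> y \<in> T \<Longrightarrow> \<bar>g x - g y\<bar> \<le> D * frob p q (x - y)"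
    using g by (rule mat_lipschitz_onE) blast
  show ?thesis
  proof (rule mat_lipschitz_onI[of _ _ "D * C"])
    fix x y assume xy: "x \<in> S" "y \<in> S"
    have "\<bar>g (F x) - g (F y)\<bar> \<le> D * frob p q (F x - F y)" using D F xy by auto
    also have "\<dots> \<le> D * (C * frob m n (x - y))" using C xy D by (intro mult_left_mono) auto
    finally show "\<bar>g (F x) - g (F y)\<bar> \<le> D * C * frob m n (x - y)" by (simp add: mult_ac)
  qed
qed

text \<open>Products of Lipschitz functions are Lipschitz only when the factors are bounded, so the
  algebraic closure properties are developed for bounded Lipschitz functions.\<close>

definition mat_bounded_lipschitz_on :: "nat \<Rightarrow> nat \<Rightarrow> real mat set \<Rightarrow> (real mat \<Rightarrow> real) \<Rightarrow> bool" where
  "mat_bounded_lipschitz_on m n S f \<longleftrightarrow> mat_lipschitz_on m n S f \<and> (\<exists>B. \<forall>x\<in>S. \<bar>f x\<bar> \<le> B)"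

lemma mat_bounded_lipschitz_onE:
  assumes "mat_bounded_lipschitz_on m n S f"
  obtains C B where "C \<ge> 0" "B \<ge> 0"
    "\<And>x y. x \<in> S \<Longrightarrow> y \<in> S \<Longrightarrow> \<bar>f x - f y\<bar> \<le> C * frob m n (x - y)"
    "\<And>x. x \<in> S \<Longrightarrow> \<bar>f x\<bar> \<le> B"
proof -
  obtain B where "\<And>x. x \<in> S \<Longrightarrow> \<bar>f x\<bar> \<le> B"
    using assms unfolding mat_bounded_lipschitz_on_def by blast
  hence "\<And>x. x \<in> S \<Longrightarrow> \<bar>f x\<bar> \<le> \<bar>B\<bar>" by (meson abs_ge_self order_trans)
  thus ?thesis using assms that unfolding mat_bounded_lipschitz_on_def
    by (metis abs_ge_zero mat_lipschitz_onE)
qed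

lemma mat_bounded_lipschitz_on_const: "mat_bounded_lipschitz_on m n S (\<lambda>_. c)"
  unfolding mat_bounded_lipschitz_on_def by (auto intro!: mat_lipschitz_onI[of _ _ 0] simp: frob_nonneg)

lemma mat_bounded_lipschitz_on_add:
  assumes "mat_bounded_lipschitz_on m n S f" "mat_bounded_lipschitz_on m n S g"
  shows "mat_bounded_lipschitz_on m n S (\<lambda>x. f x + g x)"
proof -
  obtain B1 where 1: "\<And>x. x \<in> S \<Longrightarrow> \<bar>f x\<bar> \<le> B1" using assms(1) by (rule mat_bounded_lipschitz_onE) blast
  obtain B2 where 2: "\<And>x. x \<in> S \<Longrightarrow> \<bar>g x\<bar> \<le> B2" using assms(2) by (rule mat_bounded_lipschitz_onE) blast
  have "\<forall>x\<in>S. \<bar>f x + g x\<bar> \<le> B1 + B2" using 1 2 by (metis abs_triangle_ineq add_mono order_trans)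
  thus ?thesis using assms mat_lipschitz_on_add unfolding mat_bounded_lipschitz_on_def by blast
qed

lemma mat_bounded_lipschitz_on_uminus:
  "mat_bounded_lipschitz_on m n S f \<Longrightarrow> mat_bounded_lipschitz_on m n S (\<lambda>x. - f x)"
  unfolding mat_bounded_lipschitz_on_def mat_lipschitz_on_def by (auto simp: abs_minus_commute)

lemma mat_bounded_lipschitz_on_diff:
  assumes "mat_bounded_lipschitz_on m n S f" "mat_bounded_lipschitz_on m n S g"
  shows "mat_bounded_lipschitz_on m n S (\<lambda>x. f x - g x)"
  using mat_bounded_lipschitz_on_add[OF assms(1) mat_bounded_lipschitz_on_uminus[OF assms(2)]] by simp

lemma mat_bounded_lipschitz_on_mult:
  assumes "mat_bounded_lipschitz_on m n S f" "mat_bounded_lipschitz_on m n S g"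
  shows "mat_bounded_lipschitz_on m n S (\<lambda>x. f x * g x)"
proof -
  obtain C1 B1 where 1: "C1 \<ge> 0" "B1 \<ge> 0" "\<And>x y. x \<in> S \<Longrightarrow> y \<in> S \<Longrightarrow> \<bar>f x - f y\<bar> \<le> C1 * frob m n (x - y)"
    "\<And>x. x \<in> S \<Longrightarrow> \<bar>f x\<bar> \<le> B1" using assms(1) by (rule mat_bounded_lipschitz_onE) blast
  obtain C2 B2 where 2: "C2 \<ge> 0" "B2 \<ge> 0" "\<And>x y. x \<in> S \<Longrightarrow> y \<in> S \<Longrightarrow> \<bar>g x - g y\<bar> \<le> C2 * frob m n (x - y)"
    "\<And>x. x \<in> S \<Longrightarrow> \<bar>g x\<bar> \<le> B2" using assms(2) by (rule mat_bounded_lipschitz_onE) blast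
  have "mat_lipschitz_on m n S (\<lambda>x. f x * g x)"
  proof (rule mat_lipschitz_onI[of _ _ "B1 * C2 + B2 * C1"])
    fix x y assume xy: "x \<in> S" "y \<in> S"
    have "f x * g x - f y * g y = f x * (g x - g y) + g y * (f x - f y)" by (simp add: algebra_simps)
    hence "\<bar>f x * g x - f y * g y\<bar> \<le> \<bar>f x\<bar> * \<bar>g x - g y\<bar> + \<bar>g y\<bar> * \<bar>f x - f y\<bar>"
      by (metis abs_mult abs_triangle_ineq)
    also have "\<dots> \<le> B1 * (C2 * frob m n (x - y)) + B2 * (C1 * frob m n (x - y))"
      using 1 2 xy by (intro add_mono mult_mono) auto
    finally show "\<bar>f x * g x - f y * g y\<bar> \<le> (B1 * C2 + B2 * C1) * frob m n (x - y)"
      by (simp add: algebra_simps)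
  qed
  moreover have "\<forall>x\<in>S. \<bar>f x * g x\<bar> \<le> B1 * B2" using 1 2 by (auto simp: abs_mult intro: mult_mono)
  ultimately show ?thesis unfolding mat_bounded_lipschitz_on_def by blast
qed

lemma mat_bounded_lipschitz_on_sum:
  "finite I \<Longrightarrow> (\<And>i. i \<in> I \<Longrightarrow> mat_bounded_lipschitz_on m n S (f i)) \<Longrightarrow>
    mat_bounded_lipschitz_on m n S (\<lambda>x. \<Sum>i\<in>I. f i x)"
  by (induction I rule: finite_induct)
    (auto intro: mat_bounded_lipschitz_on_add mat_bounded_lipschitz_on_const)

lemma mat_bounded_lipschitz_on_prod:
  "finite I \<Longrightarrow> (\<And>i. i \<in> I \<Longrightarrow> mat_bounded_lipschitz_on m n S (f i)) \<Longrightarrow>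
    mat_bounded_lipschitz_on m n S (\<lambda>x. \<Prod>i\<in>I. f i x)"
  by (induction I rule: finite_induct)
    (auto intro: mat_bounded_lipschitz_on_mult mat_bounded_lipschitz_on_const)

lemma mat_bounded_lipschitz_on_compose_real:
  assumes f: "mat_lipschitz_on m n S f" and fT: "\<And>x. x \<in> S \<Longrightarrow> f x \<in> T"
    and g_lip: "\<And>a b. a \<in> T \<Longrightarrow> b \<in> T \<Longrightarrow> \<bar>g a - g b\<bar> \<le> L * \<bar>a - b\<bar>"
    and g_bounded: "\<And>a. a \<in> T \<Longrightarrow> \<bar>g a\<bar> \<le> K"
  shows "mat_bounded_lipschitz_on m n S (\<lambda>x. g (f x))"
proof -
  obtain C where C: "C \<ge> 0" "\<And>x y. x \<in> S \<Longrightarrow> y \<in> S \<Longrightarrow> \<bar>f x - f y\<bar> \<le> C * frob m n (x - y)"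
    using f by (rule mat_lipschitz_onE) blast
  have "mat_lipschitz_on m n S (\<lambda>x. g (f x))"
  proof (rule mat_lipschitz_onI[of _ _ "\<bar>L\<bar> * C"])
    fix x y assume xy: "x \<in> S" "y \<in> S"
    have "\<bar>g (f x) - g (f y)\<bar> \<le> L * \<bar>f x - f y\<bar>" using g_lip fT xy by blast
    also have "\<dots> \<le> \<bar>L\<bar> * \<bar>f x - f y\<bar>" by (intro mult_right_mono) auto
    also have "\<dots> \<le> \<bar>L\<bar> * (C * frob m n (x - y))" using C xy by (intro mult_left_mono) auto
    finally show "\<bar>g (f x) - g (f y)\<bar> \<le> \<bar>L\<bar> * C * frob m n (x - y)" by (simp add: mult_ac)
  qed
  thus ?thesis unfolding mat_bounded_lipschitz_on_def using g_bounded fT by blast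
qed

lemma abs_sin_diff_le: "\<bar>sin a - sin b\<bar> \<le> \<bar>a - b\<bar>" for a b :: real
proof -
  have "\<bar>sin a - sin b\<bar> = 2 * \<bar>sin ((a - b) / 2)\<bar> * \<bar>cos ((a + b) / 2)\<bar>"
    unfolding sin_diff_sin by (simp add: abs_mult)
  also have "\<dots> \<le> 2 * \<bar>(a - b) / 2\<bar> * 1" by (intro mult_mono abs_sin_x_le_abs_x) auto
  finally show ?thesis by simp
qed

lemma abs_cos_diff_le: "\<bar>cos a - cos b\<bar> \<le> \<bar>a - b\<bar>" for a b :: real
proof -
  have "\<bar>cos a - cos b\<bar> = 2 * \<bar>sin ((a + b) / 2)\<bar> * \<bar>sin ((b - a) / 2)\<bar>"
    unfolding cos_diff_cos by (simp add: abs_mult)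
  also have "\<dots> \<le> 2 * 1 * \<bar>(b - a) / 2\<bar>" by (intro mult_mono abs_sin_x_le_abs_x) auto
  finally show ?thesis by simp
qed

lemma mat_bounded_lipschitz_on_sin:
  "mat_lipschitz_on m n S f \<Longrightarrow> mat_bounded_lipschitz_on m n S (\<lambda>x. sin (f x))"
  by (rule mat_bounded_lipschitz_on_compose_real[where T = UNIV and L = 1 and K = 1])
    (auto simp: abs_sin_diff_le)

lemma mat_bounded_lipschitz_on_cos:
  "mat_lipschitz_on m n S f \<Longrightarrow> mat_bounded_lipschitz_on m n S (\<lambda>x. cos (f x))"
  by (rule mat_bounded_lipschitz_on_compose_real[where T = UNIV and L = 1 and K = 1])
    (auto simp: abs_cos_diff_le)

lemma abs_inverse_sqrt_diff_le:
  fixes a b d :: real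
  assumes d: "d > 0" and ad: "a \<ge> d" and bd: "b \<ge> d"
  shows "\<bar>1 / sqrt a - 1 / sqrt b\<bar> \<le> \<bar>a - b\<bar> / (2 * d * sqrt d)"
proof -
  have sd: "sqrt d > 0" and sa: "sqrt a \<ge> sqrt d" and sb: "sqrt b \<ge> sqrt d" using d ad bd by auto
  have "(sqrt b - sqrt a) * (sqrt a + sqrt b) = b - a"
    using ad bd d by (simp add: algebra_simps)
  moreover have "sqrt a + sqrt b \<noteq> 0" using sa sb sd by linarith
  ultimately have "sqrt b - sqrt a = (b - a) / (sqrt a + sqrt b)"
    by (simp add: eq_divide_eq)
  moreover have "1 / sqrt a - 1 / sqrt b = (sqrt b - sqrt a) / (sqrt a * sqrt b)"
    using sa sb sd by (simp add: field_simps)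
  ultimately have "\<bar>1 / sqrt a - 1 / sqrt b\<bar> = \<bar>a - b\<bar> / (sqrt a * sqrt b * (sqrt a + sqrt b))"
    using sa sb sd by (simp add: abs_divide abs_minus_commute)
  also have "\<dots> \<le> \<bar>a - b\<bar> / (sqrt d * sqrt d * (2 * sqrt d))"
  proof (rule divide_left_mono)
    have "sqrt d * sqrt d \<le> sqrt a * sqrt b" using sa sb sd by (intro mult_mono) auto
    moreover have "2 * sqrt d \<le> sqrt a + sqrt b" using sa sb by linarith
    ultimately show "sqrt d * sqrt d * (2 * sqrt d) \<le> sqrt a * sqrt b * (sqrt a + sqrt b)"
      using sd ad bd d by (intro mult_mono) auto
  qed (use sd sa sb in \<open>auto intro!: mult_pos_pos add_pos_pos\<close>)
  also have "\<dots> = \<bar>a - b\<bar> / (2 * d * sqrt d)" using d by simp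
  finally show ?thesis .
qed

lemma mat_lipschitz_on_imp_bounded:
  assumes f: "mat_lipschitz_on m n S f" and diam: "\<And>x y. x \<in> S \<Longrightarrow> y \<in> S \<Longrightarrow> frob m n (x - y) \<le> R"
  shows "mat_bounded_lipschitz_on m n S f"
proof (cases "S = {}")
  case False
  then obtain x0 where x0: "x0 \<in> S" by auto
  obtain C where C: "C \<ge> 0" "\<And>x y. x \<in> S \<Longrightarrow> y \<in> S \<Longrightarrow> \<bar>f x - f y\<bar> \<le> C * frob m n (x - y)"
    using f by (rule mat_lipschitz_onE) blast
  have "\<bar>f x\<bar> \<le> \<bar>f x0\<bar> + C * R" if x: "x \<in> S" for x
  proof -
    have "\<bar>f x\<bar> \<le> \<bar>f x0\<bar> + \<bar>f x - f x0\<bar>" by linarith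
    also have "\<dots> \<le> \<bar>f x0\<bar> + C * frob m n (x - x0)" using C x x0 by auto
    also have "\<dots> \<le> \<bar>f x0\<bar> + C * R" using diam[OF x x0] C by (intro add_left_mono mult_left_mono) auto
    finally show ?thesis .
  qed
  thus ?thesis using f unfolding mat_bounded_lipschitz_on_def by blast
qed (use f in \<open>simp add: mat_bounded_lipschitz_on_def\<close>)

definition mat_box :: "nat \<Rightarrow> nat \<Rightarrow> real \<Rightarrow> real \<Rightarrow> real mat set" where
  "mat_box m n lo hi = {x \<in> carrier_mat m n. \<forall>i<m. \<forall>j<n. lo \<le> x $$ (i,j) \<and> x $$ (i,j) \<le> hi}"

lemma mat_box_subset_carrier: "mat_box m n lo hi \<subseteq> carrier_mat m n"
  unfolding mat_box_def by auto

lemma frob_diff_le_mat_box: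
  assumes x: "x \<in> mat_box m n lo hi" and y: "y \<in> mat_box m n lo hi"
  shows "frob m n (x - y) \<le> sqrt (real m * real n) * (hi - lo)"
proof (rule frob_le_of_abs_index_le)
  show "x - y \<in> carrier_mat m n" using x y unfolding mat_box_def by auto
  fix i j assume ij: "i < m" "j < n"
  have "lo \<le> x $$ (i,j)" "x $$ (i,j) \<le> hi" "lo \<le> y $$ (i,j)" "y $$ (i,j) \<le> hi"
    using x y ij unfolding mat_box_def by auto
  moreover have "(x - y) $$ (i,j) = x $$ (i,j) - y $$ (i,j)" using x y ij unfolding mat_box_def by auto
  ultimately show "\<bar>(x - y) $$ (i,j)\<bar> \<le> hi - lo" by linarith
qed

text \<open>Continuity is transported along the embedding of \<open>real mat\<close> into the product space
  \<open>nat \<times> nat \<Rightarrow> real\<close>, where \<open>mat_box\<close> becomes a compact product of intervals.\<close>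

lemma continuous_on_mat_of_fun:
  assumes g: "mat_lipschitz_on m n (carrier_mat m n) g"
  shows "continuous_on UNIV (\<lambda>f. g (mat m n f))"
  unfolding continuous_on_def
proof (rule ballI)
  fix f0 :: "nat \<times> nat \<Rightarrow> real"
  obtain C where C: "\<And>x y. x \<in> carrier_mat m n \<Longrightarrow> y \<in> carrier_mat m n \<Longrightarrow>
      \<bar>g x - g y\<bar> \<le> C * frob m n (x - y)"
    using g by (rule mat_lipschitz_onE) blast
  define r where "r f = C * sqrt (\<Sum>i<m. \<Sum>j<n. (f (i,j) - f0 (i,j))^2)" for f
  have coord: "continuous_on UNIV (\<lambda>f :: nat \<times> nat \<Rightarrow> real. f ij)" for ij
    by (rule continuous_on_subset[OF continuous_on_product_coordinates]) auto
  have "continuous_on UNIV r" unfolding r_def by (intro continuous_intros coord)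
  hence "(r \<longlongrightarrow> r f0) (at f0 within UNIV)" unfolding continuous_on_def by blast
  hence r0: "(r \<longlongrightarrow> 0) (at f0 within UNIV)" unfolding r_def by simp
  have le: "norm (g (mat m n f) - g (mat m n f0)) \<le> r f" for f
  proof -
    have "frob m n (mat m n f - mat m n f0) = sqrt (\<Sum>i<m. \<Sum>j<n. (f (i,j) - f0 (i,j))^2)"
      unfolding frob_def by (intro arg_cong[where f=sqrt] sum.cong) auto
    thus ?thesis unfolding r_def using C[of "mat m n f" "mat m n f0"] by simp
  qed
  have "((\<lambda>f. g (mat m n f) - g (mat m n f0)) \<longlongrightarrow> 0) (at f0 within UNIV)"
    by (rule tendsto_0_le[OF r0, of _ 1])
      (use le in \<open>auto intro!: always_eventually intro: order_trans[OF _ abs_ge_self]\<close>)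
  thus "((\<lambda>f. g (mat m n f)) \<longlongrightarrow> g (mat m n f0)) (at f0 within UNIV)"
    by (rule LIM_zero_cancel)
qed

lemma mat_box_positive_lower_bound:
  assumes g: "mat_lipschitz_on m n (carrier_mat m n) g" and lo_hi: "lo \<le> hi"
    and pos: "\<And>x. x \<in> mat_box m n lo hi \<Longrightarrow> g x > 0"
  obtains \<delta> where "\<delta> > 0" "\<And>x. x \<in> mat_box m n lo hi \<Longrightarrow> \<delta> \<le> g x"
proof -
  define K where "K = PiE UNIV (\<lambda>(i,j). if i < m \<and> j < n then {lo..hi} else {0::real})"
  have "compactin (product_topology (\<lambda>_. euclideanreal) UNIV) K"
    unfolding K_def by (subst compactin_PiE) auto
  hence "compact K" unfolding euclidean_product_topology by (simp add: compactin_euclidean_iff)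
  moreover have "K \<noteq> {}" using lo_hi unfolding K_def by (auto simp: PiE_eq_empty_iff)
  ultimately obtain f0 where f0: "f0 \<in> K" "\<And>f. f \<in> K \<Longrightarrow> g (mat m n f0) \<le> g (mat m n f)"
    using continuous_attains_inf[of K "\<lambda>f. g (mat m n f)"]
      continuous_on_subset[OF continuous_on_mat_of_fun[OF g], of K] by blast
  have box: "mat m n f \<in> mat_box m n lo hi" if "f \<in> K" for f
    using that unfolding K_def mat_box_def by (auto simp: PiE_iff split: if_splits)
  show ?thesis
  proof (rule that[of "g (mat m n f0)"])
    show "g (mat m n f0) > 0" using pos box f0 by blast
    fix x assume x: "x \<in> mat_box m n lo hi"
    define f where "f = (\<lambda>(i,j). if i < m \<and> j < n then x $$ (i,j) else 0)"
    have "f \<in> K" using x unfolding K_def f_def mat_box_def by (auto simp: PiE_iff)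
    moreover have "mat m n f = x" using x unfolding f_def mat_box_def by (intro eq_matI) auto
    ultimately show "g (mat m n f0) \<le> g x" using f0(2) by force
  qed
qed

section \<open>The projection parameterisation\<close>

lemma Vmat_index_bounded_lipschitz:
  assumes S: "S \<subseteq> carrier_mat (d - 1) l" and k: "k < d" and j: "j < l"
  shows "mat_bounded_lipschitz_on (d - 1) l S (\<lambda>\<theta>. Vmat d l \<theta> $$ (k,j))"
proof -
  have V: "Vmat d l \<theta> $$ (k,j) = (if k < d - 1 then cos (\<theta> $$ (k,j)) * (\<Prod>r<k. sin (\<theta> $$ (r,j)))
      else (\<Prod>r<d - 1. sin (\<theta> $$ (r,j))))" for \<theta>
    using k j by (simp add: Vmat_def)
  have sines: "mat_bounded_lipschitz_on (d - 1) l S (\<lambda>\<theta>. \<Prod>r<i. sin (\<theta> $$ (r,j)))" if "i \<le> d - 1" for i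
    using S j that
    by (intro mat_bounded_lipschitz_on_prod mat_bounded_lipschitz_on_sin mat_lipschitz_on_index) auto
  show ?thesis
  proof (cases "k < d - 1")
    case True
    have "mat_bounded_lipschitz_on (d - 1) l S (\<lambda>\<theta>. cos (\<theta> $$ (k,j)) * (\<Prod>r<k. sin (\<theta> $$ (r,j))))"
      using S j True sines[of k]
      by (intro mat_bounded_lipschitz_on_mult mat_bounded_lipschitz_on_cos mat_lipschitz_on_index) auto
    thus ?thesis unfolding V using True by simp
  qed (use sines[of "d - 1"] in \<open>simp add: V\<close>)
qed

lemma Pmat_carrier: "X \<in> carrier_mat d N \<Longrightarrow> Pmat d l X \<theta> \<in> carrier_mat l N"
  unfolding Pmat_def Vmat_def by auto

lemma Pmat_index_bounded_lipschitz:
  assumes S: "S \<subseteq> carrier_mat (d - 1) l" and X: "X \<in> carrier_mat d N" and i: "i < l" and j: "j < N"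
  shows "mat_bounded_lipschitz_on (d - 1) l S (\<lambda>\<theta>. Pmat d l X \<theta> $$ (i,j))"
proof -
  have "Pmat d l X \<theta> $$ (i,j) = (\<Sum>k\<in>{0..<d}. Vmat d l \<theta> $$ (k,i) * X $$ (k,j))" for \<theta>
    using X i j by (simp add: Pmat_def Vmat_def scalar_prod_def)
  thus ?thesis
    by (simp only:) (intro mat_bounded_lipschitz_on_sum mat_bounded_lipschitz_on_mult
        Vmat_index_bounded_lipschitz[OF S] mat_bounded_lipschitz_on_const, use i in auto)
qed

lemma mat_lipschitz_on_comp_Pmat:
  assumes S: "S \<subseteq> carrier_mat (d - 1) l" and X: "X \<in> carrier_mat d N"
    and g: "mat_lipschitz_on l N (carrier_mat l N) g"
  shows "mat_lipschitz_on (d - 1) l S (\<lambda>\<theta>. g (Pmat d l X \<theta>))"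
proof -
  obtain C where "\<And>x y. x \<in> S \<Longrightarrow> y \<in> S \<Longrightarrow>
      frob l N (Pmat d l X x - Pmat d l X y) \<le> C * frob (d - 1) l (x - y)"
  proof (rule frob_lipschitz_of_index_lipschitz)
    show "\<And>i j. i < l \<Longrightarrow> j < N \<Longrightarrow> mat_lipschitz_on (d - 1) l S (\<lambda>\<theta>. Pmat d l X \<theta> $$ (i,j))"
      using Pmat_index_bounded_lipschitz[OF S X] unfolding mat_bounded_lipschitz_on_def by blast
  qed (use Pmat_carrier[OF X] that in auto)
  thus ?thesis by (intro mat_lipschitz_on_compose[OF g]) (auto simp: Pmat_carrier[OF X])
qed

lemma Theta_subset_mat_box: "Theta d l \<subseteq> mat_box (d - 1) l 0 pi"
  unfolding Theta_def mat_box_def by (auto simp: less_imp_le)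

section \<open>Graph Laplacians of Lipschitz affinity families\<close>

lemma degree_eq_sum: "A \<in> carrier_mat N N \<Longrightarrow> degree A i = (\<Sum>j<N. A $$ (i,j))"
  unfolding degree_def by simp

lemma laplacian_carrier: "A \<in> carrier_mat N N \<Longrightarrow> laplacian A \<in> carrier_mat N N"
  unfolding laplacian_def degree_mat_def by auto

lemma laplacian_index:
  "A \<in> carrier_mat N N \<Longrightarrow> i < N \<Longrightarrow> j < N \<Longrightarrow>
    laplacian A $$ (i,j) = (if i = j then degree A i else 0) - A $$ (i,j)"
  unfolding laplacian_def degree_mat_def by auto

lemma norm_laplacian_eq:
  assumes "A \<in> carrier_mat N N"
  shows "norm_laplacian A =
    mat_diag N (\<lambda>i. 1 / sqrt (degree A i)) * laplacian A * mat_diag N (\<lambda>i. 1 / sqrt (degree A i))"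
  using assms unfolding norm_laplacian_def Let_def mat_diag_def
  by (intro arg_cong2[where f = "(*)"] arg_cong2[where f = "(*)"] refl eq_matI) auto

lemma norm_laplacian_carrier:
  assumes "A \<in> carrier_mat N N" shows "norm_laplacian A \<in> carrier_mat N N"
  unfolding norm_laplacian_eq[OF assms] using laplacian_carrier[OF assms]
  by (metis mat_diag_dim mult_carrier_mat)

lemma norm_laplacian_index:
  assumes A: "A \<in> carrier_mat N N" and ij: "i < N" "j < N"
  shows "norm_laplacian A $$ (i,j) = 1 / sqrt (degree A i) * laplacian A $$ (i,j) * (1 / sqrt (degree A j))"
  using ij laplacian_carrier[OF A]
  by (simp add: norm_laplacian_eq[OF A] mat_diag_mult_left[of _ N N] mat_diag_mult_right[of _ N N])

lemma transpose_laplacian: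
  assumes A: "A \<in> carrier_mat N N" and sym: "transpose_mat A = A"
  shows "transpose_mat (laplacian A) = laplacian A"
proof -
  have "A $$ (j,i) = A $$ (i,j)" if "i < N" "j < N" for i j
    using that A sym by (metis carrier_matD index_transpose_mat(1))
  thus ?thesis using A laplacian_carrier[OF A] by (intro eq_matI) (auto simp: laplacian_index)
qed

lemma transpose_norm_laplacian:
  assumes A: "A \<in> carrier_mat N N" and sym: "transpose_mat A = A"
  shows "transpose_mat (norm_laplacian A) = norm_laplacian A"
proof -
  have "laplacian A $$ (j,i) = laplacian A $$ (i,j)" if "i < N" "j < N" for i j
    using that laplacian_carrier[OF A] transpose_laplacian[OF A sym]
    by (metis carrier_matD index_transpose_mat(1))
  thus ?thesis using A norm_laplacian_carrier[OF A]
    by (intro eq_matI) (auto simp: norm_laplacian_index)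
qed

lemma laplacian_index_bounded_lipschitz:
  assumes F: "\<And>x. F x \<in> carrier_mat N N"
    and ent: "\<And>i j. i < N \<Longrightarrow> j < N \<Longrightarrow> mat_bounded_lipschitz_on m n S (\<lambda>x. F x $$ (i,j))"
    and ij: "i < N" "j < N"
  shows "mat_bounded_lipschitz_on m n S (\<lambda>x. laplacian (F x) $$ (i,j))"
proof -
  have "mat_bounded_lipschitz_on m n S (\<lambda>x. if i = j then degree (F x) i else 0)"
    using ij by (cases "i = j")
      (auto simp: degree_eq_sum[OF F] intro!: mat_bounded_lipschitz_on_sum ent mat_bounded_lipschitz_on_const)
  hence "mat_bounded_lipschitz_on m n S (\<lambda>x. (if i = j then degree (F x) i else 0) - F x $$ (i,j))"
    using ij by (intro mat_bounded_lipschitz_on_diff ent)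
  thus ?thesis using ij by (simp add: laplacian_index[OF F])
qed

lemma norm_laplacian_index_bounded_lipschitz:
  assumes F: "\<And>x. F x \<in> carrier_mat N N"
    and ent: "\<And>i j. i < N \<Longrightarrow> j < N \<Longrightarrow> mat_bounded_lipschitz_on m n S (\<lambda>x. F x $$ (i,j))"
    and deg: "\<And>i. i < N \<Longrightarrow> \<exists>\<delta>>0. \<forall>x\<in>S. \<delta> \<le> degree (F x) i"
    and ij: "i < N" "j < N"
  shows "mat_bounded_lipschitz_on m n S (\<lambda>x. norm_laplacian (F x) $$ (i,j))"
proof -
  have inv_sqrt: "mat_bounded_lipschitz_on m n S (\<lambda>x. 1 / sqrt (degree (F x) k))" if k: "k < N" for k
  proof -
    obtain \<delta> where \<delta>: "\<delta> > 0" "\<And>x. x \<in> S \<Longrightarrow> \<delta> \<le> degree (F x) k" using deg[OF k] by blast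
    have "mat_lipschitz_on m n S (\<lambda>x. degree (F x) k)"
      using k ent unfolding degree_eq_sum[OF F] mat_bounded_lipschitz_on_def
      by (intro mat_lipschitz_on_sum) auto
    thus ?thesis
    proof (rule mat_bounded_lipschitz_on_compose_real[where T = "{\<delta>..}"])
      show "\<bar>1 / sqrt a - 1 / sqrt b\<bar> \<le> 1 / (2 * \<delta> * sqrt \<delta>) * \<bar>a - b\<bar>" if "a \<in> {\<delta>..}" "b \<in> {\<delta>..}" for a b
        using abs_inverse_sqrt_diff_le[OF \<delta>(1)] that by simp
      show "\<bar>1 / sqrt a\<bar> \<le> 1 / sqrt \<delta>" if "a \<in> {\<delta>..}" for a
        using that \<delta>(1) by (simp add: frac_le)
    qed (use \<delta> in auto)
  qed
  show ?thesis
    unfolding norm_laplacian_index[OF F ij]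
    by (intro mat_bounded_lipschitz_on_mult inv_sqrt laplacian_index_bounded_lipschitz[OF F ent] ij)
qed

lemma eig_lambda2_mat_lipschitz:
  assumes N: "N \<ge> 2" and F: "\<And>x. F x \<in> carrier_mat N N" and sym: "\<And>x. transpose_mat (F x) = F x"
    and ent: "\<And>i j. i < N \<Longrightarrow> j < N \<Longrightarrow> mat_lipschitz_on m n S (\<lambda>x. F x $$ (i,j))"
  shows "mat_lipschitz_on m n S (\<lambda>x. eig_lambda 2 (F x))"
proof -
  obtain C where C: "\<And>x y. x \<in> S \<Longrightarrow> y \<in> S \<Longrightarrow> frob N N (F x - F y) \<le> C * frob m n (x - y)"
    using frob_lipschitz_of_index_lipschitz[OF F ent] by blast
  show ?thesis
  proof (rule mat_lipschitz_onI[of _ _ "real N * C"])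
    fix x y assume xy: "x \<in> S" "y \<in> S"
    have "\<bar>eig_lambda 2 (F x) - eig_lambda 2 (F y)\<bar> \<le> real N * frob N N (F x - F y)"
      by (rule abs_eig_lambda2_diff_le[OF F F sym sym N])
    also have "\<dots> \<le> real N * (C * frob m n (x - y))" using C xy by (intro mult_left_mono) auto
    finally show "\<bar>eig_lambda 2 (F x) - eig_lambda 2 (F y)\<bar> \<le> real N * C * frob m n (x - y)"
      by (simp add: mult_ac)
  qed
qed

lemma affinity_carrier: "affinity N s P \<in> carrier_mat N N"
  unfolding affinity_def by simp

lemma transpose_affinity:
  "(\<And>i j. i < N \<Longrightarrow> j < N \<Longrightarrow> s P i j = s P j i) \<Longrightarrow> transpose_mat (affinity N s P) = affinity N s P"
  unfolding affinity_def by (rule eq_matI) auto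

lemma Theta_affinity_index_bounded_lipschitz:
  assumes X: "X \<in> carrier_mat d N"
    and lip: "\<And>i j. i < N \<Longrightarrow> j < N \<Longrightarrow> mat_lipschitz_on l N (carrier_mat l N) (\<lambda>P. s P i j)"
    and ij: "i < N" "j < N"
  shows "mat_bounded_lipschitz_on (d - 1) l (Theta d l) (\<lambda>\<theta>. affinity N s (Pmat d l X \<theta>) $$ (i,j))"
proof (rule mat_lipschitz_on_imp_bounded)
  have Theta: "Theta d l \<subseteq> mat_box (d - 1) l 0 pi" by (rule Theta_subset_mat_box)
  have "mat_lipschitz_on (d - 1) l (Theta d l) (\<lambda>\<theta>. s (Pmat d l X \<theta>) i j)"
    by (rule mat_lipschitz_on_comp_Pmat[OF _ X lip[OF ij]]) (use Theta mat_box_subset_carrier in blast)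
  thus "mat_lipschitz_on (d - 1) l (Theta d l) (\<lambda>\<theta>. affinity N s (Pmat d l X \<theta>) $$ (i,j))"
    using ij unfolding affinity_def by simp
  show "frob (d - 1) l (x - y) \<le> sqrt (real (d - 1) * real l) * (pi - 0)"
    if "x \<in> Theta d l" "y \<in> Theta d l" for x y
    using that Theta by (intro frob_diff_le_mat_box) auto
qed

lemma Theta_degree_lower_bound:
  assumes X: "X \<in> carrier_mat d N"
    and pos: "\<And>P i j. P \<in> carrier_mat l N \<Longrightarrow> i < N \<Longrightarrow> j < N \<Longrightarrow> s P i j > 0"
    and lip: "\<And>i j. i < N \<Longrightarrow> j < N \<Longrightarrow> mat_lipschitz_on l N (carrier_mat l N) (\<lambda>P. s P i j)"
    and i: "i < N"
  shows "\<exists>\<delta>>0. \<forall>\<theta>\<in>Theta d l. \<delta> \<le> degree (affinity N s (Pmat d l X \<theta>)) i"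
proof -
  have "mat_lipschitz_on (d - 1) l (carrier_mat (d - 1) l) (\<lambda>\<theta>. \<Sum>j<N. s (Pmat d l X \<theta>) i j)"
    using i by (intro mat_lipschitz_on_sum mat_lipschitz_on_comp_Pmat[OF subset_refl X] lip) auto
  moreover have "(\<Sum>j<N. s (Pmat d l X \<theta>) i j) > 0" for \<theta>
    using i by (intro sum_pos pos Pmat_carrier[OF X]) auto
  ultimately obtain \<delta> where "\<delta> > 0"
    "\<And>\<theta>. \<theta> \<in> mat_box (d - 1) l 0 pi \<Longrightarrow> \<delta> \<le> (\<Sum>j<N. s (Pmat d l X \<theta>) i j)"
    using mat_box_positive_lower_bound[where lo = 0 and hi = pi] by (metis pi_ge_zero)
  moreover have "degree (affinity N s (Pmat d l X \<theta>)) i = (\<Sum>j<N. s (Pmat d l X \<theta>) i j)" for \<theta>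
    unfolding degree_eq_sum[OF affinity_carrier] using i by (auto simp: affinity_def intro!: sum.cong)
  ultimately show ?thesis using Theta_subset_mat_box by (metis subsetD)
qed

theorem lemma1:
  fixes d l N :: nat and X :: "real mat" and s :: "real mat \<Rightarrow> nat \<Rightarrow> nat \<Rightarrow> real"
  assumes "d \<ge> 1" and "N \<ge> 2"
    and "X \<in> carrier_mat d N"
    and pos: "\<And>P i j. P \<in> carrier_mat l N \<Longrightarrow> i < N \<Longrightarrow> j < N \<Longrightarrow> s P i j > 0"
    and sym: "\<And>P i j. P \<in> carrier_mat l N \<Longrightarrow> i < N \<Longrightarrow> j < N \<Longrightarrow> s P i j = s P j i"
    and lip: "\<And>i j. i < N \<Longrightarrow> j < N \<Longrightarrow> mat_lipschitz_on l N (carrier_mat l N) (\<lambda>P. s P i j)"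
  shows "mat_lipschitz_on (d - 1) l (Theta d l)
           (\<lambda>\<theta>. eig_lambda 2 (laplacian (affinity N s (Pmat d l X \<theta>))))
       \<and> mat_lipschitz_on (d - 1) l (Theta d l)
           (\<lambda>\<theta>. eig_lambda 2 (norm_laplacian (affinity N s (Pmat d l X \<theta>))))"
proof -
  note X = \<open>X \<in> carrier_mat d N\<close> and N = \<open>N \<ge> 2\<close>
  define A where "A \<theta> = affinity N s (Pmat d l X \<theta>)" for \<theta>
  have A: "A \<theta> \<in> carrier_mat N N" and symA: "transpose_mat (A \<theta>) = A \<theta>" for \<theta>
    unfolding A_def using sym[OF Pmat_carrier[OF X]] by (auto intro: affinity_carrier transpose_affinity)
  have entries: "mat_bounded_lipschitz_on (d - 1) l (Theta d l) (\<lambda>\<theta>. A \<theta> $$ (i,j))"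
    if "i < N" "j < N" for i j
    unfolding A_def by (rule Theta_affinity_index_bounded_lipschitz[OF X lip that])
  have degrees: "\<exists>\<delta>>0. \<forall>\<theta>\<in>Theta d l. \<delta> \<le> degree (A \<theta>) i" if "i < N" for i
    unfolding A_def by (rule Theta_degree_lower_bound[OF X pos lip that])
  have "mat_lipschitz_on (d - 1) l (Theta d l) (\<lambda>\<theta>. eig_lambda 2 (laplacian (A \<theta>)))"
    using laplacian_index_bounded_lipschitz[OF A entries] unfolding mat_bounded_lipschitz_on_def
    by (intro eig_lambda2_mat_lipschitz[OF N laplacian_carrier[OF A] transpose_laplacian[OF A symA]]) blast
  moreover have "mat_lipschitz_on (d - 1) l (Theta d l) (\<lambda>\<theta>. eig_lambda 2 (norm_laplacian (A \<theta>)))"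
    using norm_laplacian_index_bounded_lipschitz[OF A entries degrees] unfolding mat_bounded_lipschitz_on_def
    by (intro eig_lambda2_mat_lipschitz[OF N norm_laplacian_carrier[OF A] transpose_norm_laplacian[OF A symA]])
      blast
  ultimately show ?thesis unfolding A_def by blast
qed

end
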